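(* Let $\tilde q=q^2$. For all integers $v\geq 1$ and $L\geq 0$, \[ \sum_{n_1,\ldots,n_v\geq 0} \frac{\tilde q^{\sum_{i=1}^v N_i(N_i+1)}}{(\tilde q)_{n_1}\cdots(\tilde q)_{n_{v-1}}(\tilde q)_{2n_v}}\cdot\frac{(q^3;q^6)_{n_v}}{(q;q^2)_{1+n_v}}\cdot\frac{(\tilde q)_{2L+1}}{(\tilde q)_{L-N_1}} =\sum_{j=-\infty}^{\infty} (-1)^j q^{(2v+1)j^2-2vj}\left(\frac{j+1}{3}\right){2L+1 \brack L+j}_{\tilde q}, \] where $N_i=n_i+n_{i+1}+\cdots+n_v$ for $i=1,\ldots,v$ (for $v=1$ the product $(\tilde q)_{n_1}\cdots(\tilde q)_{n_{v-1}}$ is empty).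
   Context: For a variable $a$ and integer $n\ge 0$, $(a;q)_n=(1-a)(1-aq)\cdots(1-aq^{n-1})$, and $(\tilde q)_n=(\tilde q;\tilde q)_n$; by convention $1/(\tilde q)_n=0$ for negative integers $n$. The $q$-binomial coefficient in base $\tilde q$ is ${A \brack B}_{\tilde q}=\frac{(\tilde q;\tilde q)_A}{(\tilde q;\tilde q)_B(\tilde q;\tilde q)_{A-B}}$ if $0\le B\le A$ are integers, and $0$ otherwise. $\left(\frac{j}{3}\right)$ is the Legendre symbol modulo 3: it equals $1$ if $j\equiv 1 \pmod 3$, $-1$ if $j\equiv -1\pmod 3$, and $0$ if $3\mid j$. *)

theory Defs
  imports "HOL-Analysis.Analysis"
begin

definition qpoch :: "complex \<Rightarrow> complex \<Rightarrow> nat \<Rightarrow> complex" where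
  "qpoch a q n = (\<Prod>k<n. 1 - a * q ^ k)"

definition inv_qfac :: "complex \<Rightarrow> int \<Rightarrow> complex" where
  "inv_qfac qt m = (if m < 0 then 0 else 1 / qpoch qt qt (nat m))"

definition qbinom :: "complex \<Rightarrow> int \<Rightarrow> int \<Rightarrow> complex" where
  "qbinom qt A B = (if 0 \<le> B \<and> B \<le> A
      then qpoch qt qt (nat A) / (qpoch qt qt (nat B) * qpoch qt qt (nat (A - B))) else 0)"

definition leg3 :: "int \<Rightarrow> int" where
  "leg3 j = (if j mod 3 = 1 then 1 else if j mod 3 = 2 then -1 else 0)"

definition Nsum :: "(nat \<Rightarrow> nat) \<Rightarrow> nat \<Rightarrow> nat \<Rightarrow> nat" where
  "Nsum n v i = (\<Sum>k=i..v. n k)"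

text \<open>Index set: tuples (n_1,...,n_v) of nonnegative integers, encoded as
  functions nat => nat vanishing outside {1..v}.\<close>
definition tuples :: "nat \<Rightarrow> (nat \<Rightarrow> nat) set" where
  "tuples v = {n. \<forall>i. i \<notin> {1..v} \<longrightarrow> n i = 0}"

end

theory Submission
  imports Defs
begin

text \<open>
  Pairing the terms j = r + 1 and j = -r turns the right-hand side into
  (q^2;q^2)_{2L+1} times sum_r q^{2vr(r+1)} a_r / ((q^2;q^2)_{L-r} (q^2;q^2)_{L+r+1}), where
  a_r = (-1)^r ((1-r)/3) q^{r^2} (1 + q^{2r+1}) with the Legendre symbol ((.)/3). Together with
  b_L = (q^3;q^6)_L / ((q^2;q^2)_{2L} (q;q^2)_{L+1}) this is a Bailey pair relative to q^2.
  To see this, evaluate the finite Jacobi triple product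
    T(z) = sum_k [2L+1, k]_{q^2} (-1)^k q^{(k-L)^2} z^k
         = prod_{m<=L} (1 - z q^{2m+1}) prod_{m<L} (q^{2m+1} - z)
  at the primitive cube roots of unity w and w^2 and form w^{2L+1} T(w) - w^{L+2} T(w^2).
  On the product side (1 - wx)(1 - w^2 x) = 1 + x + x^2 = (1 - x^3)/(1 - x) produces b_L; on the
  sum side the terms k = L - r and k = L + 1 + r combine, and the powers of w produce the
  Legendre symbol and a_r. Applying the Bailey lemma v times multiplies a_r by q^{2vr(r+1)} and
  turns b into a v-fold sum over N_1 >= ... >= N_v, which after the substitution
  n_i = N_i - N_{i+1} is the left-hand side divided by (q^2;q^2)_{2L+1}.
\<close>

lemma qpoch_0 [simp]: "qpoch a q 0 = 1"
  by (simp add: qpoch_def)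

lemma qpoch_Suc: "qpoch a q (Suc n) = qpoch a q n * (1 - a * q ^ n)"
  by (simp add: qpoch_def)

lemma qpoch_nonzero:
  assumes "norm a < 1" and "norm q \<le> 1"
  shows "qpoch a q n \<noteq> 0"
proof -
  have "norm (a * q ^ k) < 1" for k
  proof -
    have "norm a * norm q ^ k \<le> norm a"
      using assms by (simp add: mult_left_le power_le_one)
    then show ?thesis
      using assms(1) by (simp add: norm_mult norm_power)
  qed
  then have "1 - a * q ^ k \<noteq> 0" for k
    by (metis norm_one order.irrefl right_minus_eq)
  then show ?thesis
    by (simp add: qpoch_def)
qed

lemma qfact_nonzero: "norm p < 1 \<Longrightarrow> qpoch p p n \<noteq> 0"
  by (rule qpoch_nonzero) auto

lemma norm_power2_less_one: "norm (q::complex) < 1 \<Longrightarrow> norm (q\<^sup>2) < 1"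
  by (simp add: norm_power power_less_one_iff)

definition gauss_binomial :: "complex \<Rightarrow> nat \<Rightarrow> nat \<Rightarrow> complex" where
  "gauss_binomial p N k = (if k \<le> N then qpoch p p N / (qpoch p p k * qpoch p p (N - k)) else 0)"

lemma gauss_binomial_0_right: "norm p < 1 \<Longrightarrow> gauss_binomial p N 0 = 1"
  by (simp add: gauss_binomial_def qfact_nonzero)

lemma gauss_binomial_eq_0 [simp]: "N < k \<Longrightarrow> gauss_binomial p N k = 0"
  by (simp add: gauss_binomial_def)

lemma gauss_binomial_Suc_Suc:
  assumes p: "norm p < 1"
  shows "gauss_binomial p (Suc N) (Suc k) = gauss_binomial p N (Suc k) + p ^ (N - k) * gauss_binomial p N k"
proof (cases "Suc k \<le> N")
  case True
  then obtain d where N: "N = k + Suc d"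
    using less_imp_Suc_add by fastforce
  define x y where "x = p ^ Suc k" and "y = p ^ Suc d"
  have nz: "qpoch p p n \<noteq> 0" for n
    using qfact_nonzero[OF p] .
  have x: "1 - x \<noteq> 0" and y: "1 - y \<noteq> 0"
    using nz[of "Suc k"] nz[of "Suc d"] by (auto simp: qpoch_Suc x_def y_def)
  have "p ^ Suc N = x * y"
    by (simp add: N x_def y_def ac_simps flip: power_add)
  then have "gauss_binomial p (Suc N) (Suc k)
      = qpoch p p N * (1 - x * y) / (qpoch p p k * (1 - x) * (qpoch p p d * (1 - y)))"
    using True by (simp add: gauss_binomial_def qpoch_Suc N x_def y_def)
  also have "\<dots> = qpoch p p N / (qpoch p p k * (1 - x) * qpoch p p d)
      + y * (qpoch p p N / (qpoch p p k * (qpoch p p d * (1 - y))))"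
  proof -
    have "F * (1 - (1 - u) * (1 - w)) / (a * u * (b * w))
        = F / (a * u * b) + (1 - w) * (F / (a * (b * w)))"
      if "a \<noteq> 0" "b \<noteq> 0" "u \<noteq> 0" "w \<noteq> 0" for F a b u w :: complex
      using that by (simp add: field_simps)
    from this[of "qpoch p p k" "qpoch p p d" "1 - x" "1 - y"] show ?thesis
      using nz x y by simp
  qed
  also have "\<dots> = gauss_binomial p N (Suc k) + p ^ (N - k) * gauss_binomial p N k"
    using True by (simp add: gauss_binomial_def qpoch_Suc N x_def y_def)
  finally show ?thesis .
next
  case False
  then show ?thesis
    by (cases "k = N") (simp_all add: gauss_binomial_def qfact_nonzero[OF p])
qed

lemma sum_gauss_binomial_Suc:
  assumes p: "norm p < 1"
  shows "(\<Sum>k\<le>Suc N. gauss_binomial p (Suc N) k * t k)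
       = (\<Sum>k\<le>N. gauss_binomial p N k * (t k + p ^ (N - k) * t (Suc k)))"
proof -
  have "(\<Sum>k\<le>Suc N. gauss_binomial p (Suc N) k * t k)
      = t 0 + (\<Sum>k\<le>N. gauss_binomial p N (Suc k) * t (Suc k))
            + (\<Sum>k\<le>N. gauss_binomial p N k * p ^ (N - k) * t (Suc k))"
    by (simp add: sum.atMost_Suc_shift gauss_binomial_0_right[OF p] gauss_binomial_Suc_Suc[OF p]
        sum.distrib algebra_simps del: sum.atMost_Suc)
  also have "t 0 + (\<Sum>k\<le>N. gauss_binomial p N (Suc k) * t (Suc k))
      = (\<Sum>k\<le>Suc N. gauss_binomial p N k * t k)"
    by (simp add: sum.atMost_Suc_shift gauss_binomial_0_right[OF p] del: sum.atMost_Suc)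
  also have "\<dots> = (\<Sum>k\<le>N. gauss_binomial p N k * t k)"
    by simp
  finally show ?thesis
    by (simp add: sum.distrib algebra_simps)
qed

lemma q_binomial_theorem:
  assumes p: "norm p < 1"
  shows "(\<Sum>k\<le>N. gauss_binomial p N k * (-1) ^ k * p ^ (k choose 2) * y ^ k) = (\<Prod>i<N. 1 - y * p ^ i)"
proof (induction N)
  case 0
  then show ?case by (simp add: gauss_binomial_0_right[OF p] binomial_eq_0)
next
  case (Suc N)
  define c where "c k = (-1) ^ k * p ^ (k choose 2) * y ^ k" for k
  have step: "p ^ (N - k) * c (Suc k) = - (y * p ^ N) * c k" if "k \<le> N" for k
  proof -
    have "N - k + (Suc k choose 2) = N + (k choose 2)"
      using that by (simp add: choose_two) (cases k; simp)
    then have "p ^ (N - k) * p ^ (Suc k choose 2) = p ^ N * p ^ (k choose 2)"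
      by (simp flip: power_add)
    then show ?thesis
      by (simp add: c_def algebra_simps)
  qed
  have "(\<Sum>k\<le>Suc N. gauss_binomial p (Suc N) k * c k)
      = (\<Sum>k\<le>N. gauss_binomial p N k * (c k + p ^ (N - k) * c (Suc k)))"
    by (rule sum_gauss_binomial_Suc[OF p])
  also have "\<dots> = (\<Sum>k\<le>N. (1 - y * p ^ N) * (gauss_binomial p N k * c k))"
    by (rule sum.cong) (simp_all add: step[unfolded mult.commute[of "p ^ _"]] algebra_simps)
  also have "\<dots> = (1 - y * p ^ N) * (\<Sum>k\<le>N. gauss_binomial p N k * c k)"
    by (simp add: sum_distrib_left)
  also have "(\<Sum>k\<le>N. gauss_binomial p N k * c k) = (\<Prod>i<N. 1 - y * p ^ i)"
    using Suc.IH by (simp add: c_def mult.assoc)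
  finally show ?case
    by (simp add: c_def mult_ac del: sum.atMost_Suc)
qed

lemma sum_gauss_binomial_div_qfact:
  assumes p: "norm p < 1"
  shows "(\<Sum>m\<le>N. gauss_binomial p N m * (p ^ (m * m + b * m) / qpoch p p (m + b)))
       = 1 / qpoch p p (N + b)"
proof (induction N arbitrary: b)
  case 0
  then show ?case by (simp add: gauss_binomial_0_right[OF p])
next
  case (Suc N)
  define t where "t b m = p ^ (m * m + b * m) / qpoch p p (m + b)" for b m
  have shift: "p ^ (N - m) * t b (Suc m) = p ^ (N + b + 1) * t (b + 1) m" if "m \<le> N" for m
  proof -
    have "N - m + (Suc m * Suc m + b * Suc m) = N + b + 1 + (m * m + (b + 1) * m)"
      using that by (simp add: algebra_simps)
    then show ?thesis
      by (simp add: t_def power_add[symmetric] ac_simps)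
  qed
  have "(\<Sum>m\<le>Suc N. gauss_binomial p (Suc N) m * t b m)
      = (\<Sum>m\<le>N. gauss_binomial p N m * (t b m + p ^ (N - m) * t b (Suc m)))"
    by (rule sum_gauss_binomial_Suc[OF p])
  also have "\<dots> = (\<Sum>m\<le>N. gauss_binomial p N m * t b m
      + gauss_binomial p N m * (p ^ (N + b + 1) * t (b + 1) m))"
    by (rule sum.cong) (simp_all add: distrib_left shift)
  also have "\<dots> = (\<Sum>m\<le>N. gauss_binomial p N m * t b m)
      + p ^ (N + b + 1) * (\<Sum>m\<le>N. gauss_binomial p N m * t (b + 1) m)"
    by (simp add: sum.distrib sum_distrib_left mult.left_commute)
  also have "\<dots> = 1 / qpoch p p (N + b) + p ^ (N + b + 1) / qpoch p p (N + b + 1)"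
    using Suc.IH[of b] Suc.IH[of "b + 1"] by (simp add: t_def)
  also have "\<dots> = 1 / qpoch p p (Suc N + b)"
    using qfact_nonzero[OF p, of "N + b"] qfact_nonzero[OF p, of "Suc (N + b)"]
    by (simp add: qpoch_Suc field_simps)
  finally show ?case
    by (simp add: t_def)
qed

lemma sum_atMost_triangle_swap:
  fixes L :: nat
  shows "(\<Sum>M\<le>L. \<Sum>r\<le>M. f r M) = (\<Sum>r\<le>L. \<Sum>M\<in>{r..L}. f r M)"
proof -
  have "(\<Sum>M\<le>L. \<Sum>r\<le>M. f r M) = (\<Sum>M\<le>L. \<Sum>r\<in>{r. r \<in> {..L} \<and> r \<le> M}. f r M)"
    by (intro sum.cong refl) auto
  also have "\<dots> = (\<Sum>r\<le>L. \<Sum>M\<in>{M. M \<in> {..L} \<and> r \<le> M}. f r M)"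
    by (rule sum.swap_restrict) auto
  also have "\<dots> = (\<Sum>r\<le>L. \<Sum>M\<in>{r..L}. f r M)"
    by (intro sum.cong refl) auto
  finally show ?thesis .
qed

definition bailey_pair :: "complex \<Rightarrow> (nat \<Rightarrow> complex) \<Rightarrow> (nat \<Rightarrow> complex) \<Rightarrow> bool" where
  "bailey_pair p \<alpha> \<beta> \<longleftrightarrow> (\<forall>L. \<beta> L = (\<Sum>r\<le>L. \<alpha> r / (qpoch p p (L - r) * qpoch p p (L + r + 1))))"

lemma bailey_kernel_sum:
  assumes p: "norm p < 1" and "r \<le> L"
  shows "(\<Sum>M\<in>{r..L}. p ^ (M * (M + 1)) / (qpoch p p (L - M) * qpoch p p (M - r) * qpoch p p (M + r + 1)))
       = p ^ (r * (r + 1)) / (qpoch p p (L - r) * qpoch p p (L + r + 1))"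
proof -
  define N where "N = L - r"
  have nz: "qpoch p p n \<noteq> 0" for n
    using qfact_nonzero[OF p] .
  have "(\<Sum>M\<in>{r..L}. p ^ (M * (M + 1)) / (qpoch p p (L - M) * qpoch p p (M - r) * qpoch p p (M + r + 1)))
      = (\<Sum>m\<le>N. p ^ ((m + r) * (m + r + 1)) / (qpoch p p (N - m) * qpoch p p m * qpoch p p (m + 2 * r + 1)))"
  proof -
    have "(\<Sum>M\<in>{r..L}. g M) = (\<Sum>m\<le>N. g (m + r))" for g :: "nat \<Rightarrow> complex"
      using sum.shift_bounds_cl_nat_ivl[of g 0 r N] \<open>r \<le> L\<close> by (simp add: N_def atLeast0AtMost)
    then show ?thesis
      by (simp add: N_def algebra_simps mult_2_right)
  qed
  also have "\<dots> = p ^ (r * (r + 1)) / qpoch p p N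
      * (\<Sum>m\<le>N. gauss_binomial p N m * (p ^ (m * m + (2 * r + 1) * m) / qpoch p p (m + (2 * r + 1))))"
    unfolding sum_distrib_left
  proof (rule sum.cong)
    fix m assume "m \<in> {..N}"
    moreover have "p ^ ((m + r) * (m + r + 1)) = p ^ (r * (r + 1)) * p ^ (m * m + (2 * r + 1) * m)"
      unfolding power_add[symmetric] by (rule arg_cong[where f="(^) p"]) (simp add: algebra_simps)
    ultimately show "p ^ ((m + r) * (m + r + 1)) / (qpoch p p (N - m) * qpoch p p m * qpoch p p (m + 2 * r + 1))
        = p ^ (r * (r + 1)) / qpoch p p N * (gauss_binomial p N m * (p ^ (m * m + (2 * r + 1) * m) / qpoch p p (m + (2 * r + 1))))"
      using nz by (simp add: gauss_binomial_def field_simps)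
  qed simp
  also have "\<dots> = p ^ (r * (r + 1)) / qpoch p p N * (1 / qpoch p p (N + (2 * r + 1)))"
    by (simp only: sum_gauss_binomial_div_qfact[OF p])
  also have "N + (2 * r + 1) = L + r + 1"
    using \<open>r \<le> L\<close> by (simp add: N_def)
  finally show ?thesis
    by (simp add: N_def)
qed

lemma bailey_lemma:
  assumes p: "norm p < 1" and "bailey_pair p \<alpha> \<beta>"
  shows "bailey_pair p (\<lambda>r. p ^ (r * (r + 1)) * \<alpha> r) (\<lambda>L. \<Sum>M\<le>L. p ^ (M * (M + 1)) * \<beta> M / qpoch p p (L - M))"
  unfolding bailey_pair_def
proof
  fix L
  define c where "c r M = p ^ (M * (M + 1)) / (qpoch p p (L - M) * qpoch p p (M - r) * qpoch p p (M + r + 1))" for r M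
  have "(\<Sum>M\<le>L. p ^ (M * (M + 1)) * \<beta> M / qpoch p p (L - M)) = (\<Sum>M\<le>L. \<Sum>r\<le>M. \<alpha> r * c r M)"
    using assms(2) by (simp add: bailey_pair_def c_def sum_distrib_left sum_divide_distrib ac_simps)
  also have "\<dots> = (\<Sum>r\<le>L. \<alpha> r * (\<Sum>M\<in>{r..L}. c r M))"
    by (simp add: sum_atMost_triangle_swap sum_distrib_left)
  also have "\<dots> = (\<Sum>r\<le>L. p ^ (r * (r + 1)) * \<alpha> r / (qpoch p p (L - r) * qpoch p p (L + r + 1)))"
    using bailey_kernel_sum[OF p] by (intro sum.cong) (simp_all add: c_def)
  finally show "(\<Sum>M\<le>L. p ^ (M * (M + 1)) * \<beta> M / qpoch p p (L - M))
      = (\<Sum>r\<le>L. p ^ (r * (r + 1)) * \<alpha> r / (qpoch p p (L - r) * qpoch p p (L + r + 1)))" .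
qed

lemma prod_odd_powers: "(\<Prod>m<L. q ^ (2 * m + 1)) = (q::complex) ^ (L * L)"
proof (induction L)
  case (Suc L)
  have "L * L + (2 * L + 1) = Suc L * Suc L"
    by simp
  then have "q ^ (L * L) * q ^ (2 * L + 1) = q ^ (Suc L * Suc L)"
    by (metis power_add)
  then show ?case
    by (simp only: prod.lessThan_Suc Suc.IH)
qed simp

lemma prod_lessThan_add: "(\<Prod>i<a + b. f i) = (\<Prod>i<a. f i) * (\<Prod>m<b. f (a + m))"
  for f :: "nat \<Rightarrow> 'a::comm_monoid_mult"
  by (induction b) (simp_all add: ac_simps)

lemma sum_lessThan_add: "(\<Sum>i<a + b. f i) = (\<Sum>i<a. f i) + (\<Sum>m<b. f (a + m))"
  for f :: "nat \<Rightarrow> 'a::comm_monoid_add"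
  by (induction b) (simp_all add: ac_simps)

lemma double_choose_two_add: "2 * (k choose 2) + k = k * k"
  by (induction k) (simp_all add: numeral_2_eq_2)

lemma square_distance_exponent: "L * L + 2 * (k choose 2) + k = nat ((int k - int L)\<^sup>2) + 2 * L * k"
proof -
  have "int (nat ((int k - int L)\<^sup>2)) = (int k - int L)\<^sup>2"
    by simp
  then have "int (nat ((int k - int L)\<^sup>2) + 2 * L * k) = int (L * L + k * k)"
    by (simp add: power2_eq_square algebra_simps)
  with double_choose_two_add[of k] show ?thesis
    by (simp only: of_nat_eq_iff)
qed

lemma recentred_summand:
  fixes q z :: complex
  assumes "q \<noteq> 0"
  shows "q ^ (L * L) * ((q\<^sup>2) ^ (k choose 2) * (z * q / q ^ (2 * L)) ^ k) = q ^ nat ((int k - int L)\<^sup>2) * z ^ k"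
proof -
  from square_distance_exponent[of L k]
  have exponent: "q ^ (L * L) * (q\<^sup>2) ^ (k choose 2) * q ^ k = q ^ nat ((int k - int L)\<^sup>2) * q ^ (2 * L * k)"
    by (metis power_add power_mult)
  have "(z * q / q ^ (2 * L)) ^ k = z ^ k * q ^ k / q ^ (2 * L * k)"
    by (simp add: power_divide power_mult_distrib power_mult)
  then have "q ^ (L * L) * ((q\<^sup>2) ^ (k choose 2) * (z * q / q ^ (2 * L)) ^ k)
      = q ^ (L * L) * (q\<^sup>2) ^ (k choose 2) * q ^ k * z ^ k / q ^ (2 * L * k)"
    by simp
  also have "\<dots> = q ^ nat ((int k - int L)\<^sup>2) * z ^ k"
    unfolding exponent using assms by simp
  finally show ?thesis .
qed

definition triple_sum :: "complex \<Rightarrow> nat \<Rightarrow> complex \<Rightarrow> complex" where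
  "triple_sum q L z =
     (\<Sum>k\<le>2 * L + 1. gauss_binomial (q\<^sup>2) (2 * L + 1) k * (-1) ^ k * q ^ nat ((int k - int L)\<^sup>2) * z ^ k)"

lemma finite_triple_product_nonzero:
  assumes q: "norm q < 1" and "q \<noteq> 0"
  shows "triple_sum q L z = (\<Prod>m\<le>L. 1 - z * q ^ (2 * m + 1)) * (\<Prod>m<L. q ^ (2 * m + 1) - z)"
proof -
  define y where "y = z * q / q ^ (2 * L)"
  have summand: "q ^ (L * L) * ((q\<^sup>2) ^ (k choose 2) * y ^ k) = q ^ nat ((int k - int L)\<^sup>2) * z ^ k" for k
    unfolding y_def by (rule recentred_summand[OF \<open>q \<noteq> 0\<close>])
  have "triple_sum q L z = q ^ (L * L) * (\<Sum>k\<le>2 * L + 1. gauss_binomial (q\<^sup>2) (2 * L + 1) k * (-1) ^ k * (q\<^sup>2) ^ (k choose 2) * y ^ k)"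
    unfolding triple_sum_def sum_distrib_left
    by (rule sum.cong[OF refl]) (simp only: mult.assoc summand[symmetric], simp add: ac_simps)
  also have "\<dots> = q ^ (L * L) * (\<Prod>i<2 * L + 1. 1 - y * (q\<^sup>2) ^ i)"
    by (simp only: q_binomial_theorem[OF norm_power2_less_one[OF q]])
  also have "\<dots> = (q ^ (L * L) * (\<Prod>m<L. 1 - y * (q\<^sup>2) ^ (L - Suc m))) * (\<Prod>m<L + 1. 1 - y * (q\<^sup>2) ^ (L + m))"
    by (simp only: mult_2 add.assoc prod_lessThan_add[where a = L and b = "L + 1"]
        prod.nat_diff_reindex[where g = "\<lambda>i. 1 - y * (q\<^sup>2) ^ i"] mult.assoc)
  also have "(\<Prod>m<L + 1. 1 - y * (q\<^sup>2) ^ (L + m)) = (\<Prod>m\<le>L. 1 - z * q ^ (2 * m + 1))"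
    using \<open>q \<noteq> 0\<close> by (intro prod.cong) (auto simp: y_def power_add power_mult[symmetric])
  also have "q ^ (L * L) * (\<Prod>m<L. 1 - y * (q\<^sup>2) ^ (L - Suc m)) = (\<Prod>m<L. q ^ (2 * m + 1) - z)"
  proof -
    have "q ^ (2 * m + 1) * (1 - y * (q\<^sup>2) ^ (L - Suc m)) = q ^ (2 * m + 1) - z" if "m < L" for m
    proof -
      have "2 * L = (2 * m + 1) + (2 * (L - Suc m) + 1)"
        using that by simp
      then have "q ^ (2 * L) = q ^ (2 * m + 1) * (q ^ (2 * (L - Suc m)) * q)"
        by (metis power_add power_one_right)
      then show ?thesis
        using \<open>q \<noteq> 0\<close> by (simp add: y_def power_mult[symmetric] field_simps)
    qed
    then show ?thesis
      by (simp add: prod_odd_powers[symmetric] prod.distrib[symmetric])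
  qed
  finally show ?thesis
    by (simp add: ac_simps)
qed

lemma finite_triple_product:
  assumes "norm q < 1"
  shows "triple_sum q L z = (\<Prod>m\<le>L. 1 - z * q ^ (2 * m + 1)) * (\<Prod>m<L. q ^ (2 * m + 1) - z)"
proof (cases "q = 0")
  case True
  have "gauss_binomial 0 N k = 1" if "k \<le> N" for N k
    using that by (simp add: gauss_binomial_def qpoch_def)
  then have "triple_sum q L z = (\<Sum>k\<le>2 * L + 1. if k = L then (-1) ^ k * z ^ k else 0)"
    unfolding triple_sum_def using True by (intro sum.cong) auto
  then show ?thesis
    using True by (simp add: power_minus')
qed (use finite_triple_product_nonzero[OF assms] in blast)

definition omega :: complex where
  "omega = Complex (-1 / 2) (sqrt 3 / 2)"

lemma omega_sq_add_omega: "omega\<^sup>2 + omega = -1"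
  by (simp add: omega_def complex_eq_iff power2_eq_square)

lemma omega_cube: "omega ^ 3 = 1"
proof -
  have "omega ^ 3 - 1 = (omega - 1) * ((omega\<^sup>2 + omega) + 1)"
    by (simp add: algebra_simps power2_eq_square power3_eq_cube)
  then show ?thesis
    by (simp only: omega_sq_add_omega) simp
qed

lemma omega_pow_3_add: "omega ^ (3 * k + i) = omega ^ i"
  by (simp add: power_add power_mult omega_cube)

lemma omega_pow_mod: "omega ^ n = omega ^ (n mod 3)"
  using omega_pow_3_add[of "n div 3" "n mod 3"] by simp

lemma omega_neq_omega_sq: "omega \<noteq> omega\<^sup>2"
  by (simp add: omega_def complex_eq_iff power2_eq_square)

lemma omega_pow_diff_leg3:
  assumes "int x mod 3 = m mod 3" and "int y mod 3 = (2 * m) mod 3"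
  shows "omega ^ x - omega ^ y = of_int (leg3 m) * (omega - omega\<^sup>2)"
proof -
  have "int (x mod 3) = m mod 3" and "int (y mod 3) = (2 * m) mod 3"
    using assms by (simp_all add: of_nat_mod)
  then have "x mod 3 = nat (m mod 3)" and "y mod 3 = nat ((2 * m) mod 3)"
    by linarith+
  then have x: "omega ^ x = omega ^ nat (m mod 3)" and y: "omega ^ y = omega ^ nat ((2 * m) mod 3)"
    by (simp_all only: omega_pow_mod[of x] omega_pow_mod[of y])
  have "omega ^ 4 = omega"
    using omega_pow_3_add[of 1 1] by simp
  moreover have "m mod 3 = 0 \<and> (2 * m) mod 3 = 0 \<or> m mod 3 = 1 \<and> (2 * m) mod 3 = 2
      \<or> m mod 3 = 2 \<and> (2 * m) mod 3 = 1"
    by presburger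
  ultimately show ?thesis
    unfolding x y leg3_def by auto
qed

lemma omega_combination_pair:
  assumes "r \<le> L"
  shows "omega ^ (2 * L + 1) * (a * omega ^ (L - r) - b * omega ^ (L + 1 + r))
       - omega ^ (L + 2) * (a * (omega\<^sup>2) ^ (L - r) - b * (omega\<^sup>2) ^ (L + 1 + r))
       = (a + b) * of_int (leg3 (1 - int r)) * (omega - omega\<^sup>2)"
proof -
  have "omega ^ i * omega ^ j = omega ^ (i + j)" and "omega ^ i * (omega\<^sup>2) ^ j = omega ^ (i + 2 * j)"
    for i j :: nat
    by (simp_all add: power_add power_mult)
  moreover have "2 * L + 1 + (L - r) = 3 * L + 1 - r" and "L + 2 + 2 * (L - r) = 3 * L + 2 - 2 * r"
    and "2 * L + 1 + (L + 1 + r) = 3 * L + 2 + r" and "L + 2 + 2 * (L + 1 + r) = 3 * L + 4 + 2 * r"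
    using assms by simp_all
  ultimately have "omega ^ (2 * L + 1) * (a * omega ^ (L - r) - b * omega ^ (L + 1 + r))
       - omega ^ (L + 2) * (a * (omega\<^sup>2) ^ (L - r) - b * (omega\<^sup>2) ^ (L + 1 + r))
     = a * (omega ^ (3 * L + 1 - r) - omega ^ (3 * L + 2 - 2 * r))
       + b * (omega ^ (3 * L + 4 + 2 * r) - omega ^ (3 * L + 2 + r))"
    by (simp only: right_diff_distrib mult.left_commute[of "omega ^ _"]) (simp only: algebra_simps)
  also have "omega ^ (3 * L + 1 - r) - omega ^ (3 * L + 2 - 2 * r) = of_int (leg3 (1 - int r)) * (omega - omega\<^sup>2)"
    using assms by (intro omega_pow_diff_leg3) (simp_all add: of_nat_diff, presburger+)
  also have "omega ^ (3 * L + 4 + 2 * r) - omega ^ (3 * L + 2 + r) = of_int (leg3 (1 - int r)) * (omega - omega\<^sup>2)"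
    by (intro omega_pow_diff_leg3) presburger+
  finally show ?thesis
    by (simp add: algebra_simps)
qed

lemma omega_conjugate_factors: "(1 - omega * y) * (1 - omega\<^sup>2 * y) = 1 + y + y\<^sup>2"
proof -
  have "(1 - omega * y) * (1 - omega\<^sup>2 * y) = 1 - (omega\<^sup>2 + omega) * y + omega ^ 3 * y\<^sup>2"
    by (simp add: algebra_simps power2_eq_square power3_eq_cube)
  then show ?thesis
    by (simp only: omega_sq_add_omega omega_cube) simp
qed

lemma omega_combination_product:
  fixes x :: "nat \<Rightarrow> complex"
  shows "omega ^ (2 * L + 1) * ((\<Prod>m\<le>L. 1 - omega * x m) * (\<Prod>m<L. x m - omega))
       - omega ^ (L + 2) * ((\<Prod>m\<le>L. 1 - omega\<^sup>2 * x m) * (\<Prod>m<L. x m - omega\<^sup>2))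
       = (-1) ^ L * (omega - omega\<^sup>2) * (1 + x L) * (\<Prod>m<L. 1 + x m + (x m)\<^sup>2)"
proof -
  define A B where "A = (\<Prod>m<L. 1 - omega * x m)" and "B = (\<Prod>m<L. 1 - omega\<^sup>2 * x m)"
  have "(\<Prod>m<L. x m - omega) = (\<Prod>m<L. (- omega) * (1 - omega\<^sup>2 * x m))"
    using omega_cube by (intro prod.cong) (simp_all add: algebra_simps power2_eq_square power3_eq_cube)
  then have P1: "(\<Prod>m<L. x m - omega) = (- omega) ^ L * B"
    unfolding B_def by (simp only: prod.distrib prod_constant card_lessThan)
  have "(\<Prod>m<L. x m - omega\<^sup>2) = (\<Prod>m<L. (- omega\<^sup>2) * (1 - omega * x m))"
    using omega_cube by (intro prod.cong) (simp_all add: algebra_simps power2_eq_square power3_eq_cube)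
  then have P2: "(\<Prod>m<L. x m - omega\<^sup>2) = (- omega\<^sup>2) ^ L * A"
    unfolding A_def by (simp only: prod.distrib prod_constant card_lessThan)
  have AB: "A * B = (\<Prod>m<L. 1 + x m + (x m)\<^sup>2)"
    by (simp add: A_def B_def omega_conjugate_factors flip: prod.distrib)
  have "omega ^ (2 * L + 1) * omega ^ L = omega ^ (3 * L + 1)"
    and "omega ^ (L + 2) * (omega\<^sup>2) ^ L = omega ^ (3 * L + 2)"
    by (simp_all flip: power_add power_mult)
  then have C1: "omega ^ (2 * L + 1) * (- omega) ^ L = (-1) ^ L * omega"
    and C2: "omega ^ (L + 2) * (- omega\<^sup>2) ^ L = (-1) ^ L * omega\<^sup>2"
    by (simp_all only: power_minus[of omega] power_minus[of "omega\<^sup>2"] omega_pow_3_add mult.left_commute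
        power_one_right)
  have "(\<Prod>m\<le>L. 1 - omega * x m) = A * (1 - omega * x L)"
    and "(\<Prod>m\<le>L. 1 - omega\<^sup>2 * x m) = B * (1 - omega\<^sup>2 * x L)"
    by (simp_all add: A_def B_def flip: lessThan_Suc_atMost)
  then have "omega ^ (2 * L + 1) * ((\<Prod>m\<le>L. 1 - omega * x m) * (\<Prod>m<L. x m - omega))
       - omega ^ (L + 2) * ((\<Prod>m\<le>L. 1 - omega\<^sup>2 * x m) * (\<Prod>m<L. x m - omega\<^sup>2))
      = (omega ^ (2 * L + 1) * (- omega) ^ L) * (A * B) * (1 - omega * x L)
        - (omega ^ (L + 2) * (- omega\<^sup>2) ^ L) * (A * B) * (1 - omega\<^sup>2 * x L)"
    by (simp only: P1 P2 mult_ac)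
  also have "\<dots> = (-1) ^ L * (A * B) * (omega * (1 - omega * x L) - omega\<^sup>2 * (1 - omega\<^sup>2 * x L))"
    unfolding C1 C2 by (simp add: algebra_simps)
  also have "omega * (1 - omega * x L) - omega\<^sup>2 * (1 - omega\<^sup>2 * x L) = (omega - omega\<^sup>2) * (1 + x L)"
    using omega_cube by (simp add: algebra_simps power2_eq_square power3_eq_cube)
  finally show ?thesis
    by (simp add: AB ac_simps)
qed

lemma sum_atMost_odd_in_pairs:
  "(\<Sum>k\<le>2 * L + 1. g k) = (\<Sum>r\<le>L. g (L - r) + g (L + 1 + r))"
  for g :: "nat \<Rightarrow> 'a::comm_monoid_add"
proof -
  have "(\<Sum>k\<le>2 * L + 1. g k) = (\<Sum>k<Suc L + Suc L. g k)"
    by (simp add: lessThan_Suc_atMost[symmetric] mult_2)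
  also have "\<dots> = (\<Sum>k<Suc L. g k) + (\<Sum>r<Suc L. g (Suc L + r))"
    by (rule sum_lessThan_add)
  also have "(\<Sum>k<Suc L. g k) = (\<Sum>r<Suc L. g (L - r))"
    using sum.nat_diff_reindex[of g "Suc L"] by (simp only: diff_Suc_Suc)
  finally show ?thesis
    by (simp add: sum.distrib lessThan_Suc_atMost del: sum.lessThan_Suc)
qed

lemma triple_sum_in_pairs:
  "triple_sum q L z = (\<Sum>r\<le>L. (-1) ^ (L + r)
      * (qpoch (q\<^sup>2) (q\<^sup>2) (2 * L + 1) / (qpoch (q\<^sup>2) (q\<^sup>2) (L - r) * qpoch (q\<^sup>2) (q\<^sup>2) (L + r + 1)))
      * (q ^ (r * r) * z ^ (L - r) - q ^ ((r + 1) * (r + 1)) * z ^ (L + 1 + r)))"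
  unfolding triple_sum_def sum_atMost_odd_in_pairs
proof (rule sum.cong[OF refl])
  fix r assume "r \<in> {..L}"
  then have r: "r \<le> L" by simp
  define G where "G = qpoch (q\<^sup>2) (q\<^sup>2) (2 * L + 1) / (qpoch (q\<^sup>2) (q\<^sup>2) (L - r) * qpoch (q\<^sup>2) (q\<^sup>2) (L + r + 1))"
  have "(-1::complex) ^ (L - r) = (-1) ^ (L + r)"
    using r by (metis add.commute le_add_diff_inverse2 neg_one_power_add_eq_neg_one_power_diff)
  moreover have "nat ((int (L - r) - int L)\<^sup>2) = r * r" and "nat ((int (L + 1 + r) - int L)\<^sup>2) = (r + 1) * (r + 1)"
  proof -
    have "int (L - r) - int L = - int r" and "int (L + 1 + r) - int L = int (r + 1)"
      using r by simp_all
    then show "nat ((int (L - r) - int L)\<^sup>2) = r * r" and "nat ((int (L + 1 + r) - int L)\<^sup>2) = (r + 1) * (r + 1)"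
      by (simp_all only: power2_eq_square minus_mult_minus of_nat_mult[symmetric] nat_int)
  qed
  moreover have "gauss_binomial (q\<^sup>2) (2 * L + 1) (L - r) = G"
    and "gauss_binomial (q\<^sup>2) (2 * L + 1) (L + 1 + r) = G"
    using r by (simp_all add: G_def gauss_binomial_def Suc_diff_le mult.commute)
  ultimately show "gauss_binomial (q\<^sup>2) (2 * L + 1) (L - r) * (-1) ^ (L - r) * q ^ nat ((int (L - r) - int L)\<^sup>2) * z ^ (L - r)
      + gauss_binomial (q\<^sup>2) (2 * L + 1) (L + 1 + r) * (-1) ^ (L + 1 + r) * q ^ nat ((int (L + 1 + r) - int L)\<^sup>2) * z ^ (L + 1 + r)
    = (-1) ^ (L + r) * G * (q ^ (r * r) * z ^ (L - r) - q ^ ((r + 1) * (r + 1)) * z ^ (L + 1 + r))"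
    by (simp add: algebra_simps)
qed

definition base_alpha :: "complex \<Rightarrow> nat \<Rightarrow> complex" where
  "base_alpha q r = (-1) ^ r * of_int (leg3 (1 - int r)) * q ^ (r * r) * (1 + q ^ (2 * r + 1))"

definition base_beta :: "complex \<Rightarrow> nat \<Rightarrow> complex" where
  "base_beta q L = qpoch (q ^ 3) (q ^ 6) L / (qpoch (q\<^sup>2) (q\<^sup>2) (2 * L) * qpoch q (q\<^sup>2) (1 + L))"

lemma qfact_mult_base_beta:
  assumes q: "norm q < 1"
  shows "qpoch (q\<^sup>2) (q\<^sup>2) (2 * L + 1) * base_beta q L
       = (1 + q ^ (2 * L + 1)) * (\<Prod>m<L. 1 + q ^ (2 * m + 1) + (q ^ (2 * m + 1))\<^sup>2)"
proof -
  define x where "x m = q ^ (2 * m + 1)" for m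
  have odd: "qpoch q (q\<^sup>2) L = (\<Prod>m<L. 1 - x m)"
    unfolding qpoch_def x_def by (intro prod.cong) (simp_all add: power_mult power_add)
  have "(q ^ (2 * m + 1)) ^ 3 = q ^ 3 * (q ^ 6) ^ m" for m
    by (simp add: algebra_simps flip: power_add power_mult)
  then have "qpoch (q ^ 3) (q ^ 6) L = (\<Prod>m<L. 1 - (x m) ^ 3)"
    by (simp add: qpoch_def x_def)
  also have "\<dots> = (\<Prod>m<L. (1 - x m) * (1 + x m + (x m)\<^sup>2))"
    by (simp add: algebra_simps power2_eq_square power3_eq_cube)
  finally
  have cubes: "qpoch (q ^ 3) (q ^ 6) L = qpoch q (q\<^sup>2) L * (\<Prod>m<L. 1 + x m + (x m)\<^sup>2)"
    by (simp add: odd prod.distrib)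
  have "qpoch q (q\<^sup>2) (1 + L) = qpoch q (q\<^sup>2) L * (1 - x L)"
    by (simp add: qpoch_Suc x_def power_mult power_add)
  moreover have "qpoch (q\<^sup>2) (q\<^sup>2) (2 * L + 1) = qpoch (q\<^sup>2) (q\<^sup>2) (2 * L) * (1 - x L) * (1 + x L)"
    by (simp add: qpoch_Suc x_def algebra_simps power2_eq_square flip: power_add power_mult)
  moreover have "qpoch (q\<^sup>2) (q\<^sup>2) (2 * L) \<noteq> 0"
    by (rule qfact_nonzero[OF norm_power2_less_one[OF q]])
  moreover have "qpoch q (q\<^sup>2) L \<noteq> 0"
    using q by (intro qpoch_nonzero) (simp_all add: norm_power power_le_one)
  moreover have "1 - x L \<noteq> 0"
    using qpoch_nonzero[of q "q\<^sup>2" "Suc L"] q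
    by (auto simp: qpoch_Suc x_def norm_power power_le_one power_mult power_add)
  ultimately show ?thesis
    by (simp add: base_beta_def cubes x_def)
qed

lemma omega_combination_triple_sum_alpha:
  "omega ^ (2 * L + 1) * triple_sum q L omega - omega ^ (L + 2) * triple_sum q L (omega\<^sup>2)
   = (-1) ^ L * (omega - omega\<^sup>2) * (qpoch (q\<^sup>2) (q\<^sup>2) (2 * L + 1)
      * (\<Sum>r\<le>L. base_alpha q r / (qpoch (q\<^sup>2) (q\<^sup>2) (L - r) * qpoch (q\<^sup>2) (q\<^sup>2) (L + r + 1))))"
proof -
  define G where "G r = qpoch (q\<^sup>2) (q\<^sup>2) (2 * L + 1) / (qpoch (q\<^sup>2) (q\<^sup>2) (L - r) * qpoch (q\<^sup>2) (q\<^sup>2) (L + r + 1))"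
    for r
  have "omega ^ (2 * L + 1) * triple_sum q L omega - omega ^ (L + 2) * triple_sum q L (omega\<^sup>2)
      = (\<Sum>r\<le>L. (-1) ^ (L + r) * G r
        * (omega ^ (2 * L + 1) * (q ^ (r * r) * omega ^ (L - r) - q ^ ((r + 1) * (r + 1)) * omega ^ (L + 1 + r))
          - omega ^ (L + 2) * (q ^ (r * r) * (omega\<^sup>2) ^ (L - r) - q ^ ((r + 1) * (r + 1)) * (omega\<^sup>2) ^ (L + 1 + r))))"
    unfolding triple_sum_in_pairs G_def[symmetric] sum_distrib_left sum_subtractf[symmetric]
    by (simp only: algebra_simps)
  also have "\<dots> = (\<Sum>r\<le>L. (-1) ^ (L + r) * G r
      * ((q ^ (r * r) + q ^ ((r + 1) * (r + 1))) * of_int (leg3 (1 - int r)) * (omega - omega\<^sup>2)))"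
    by (intro sum.cong refl) (subst omega_combination_pair; simp)
  also have "\<dots> = (\<Sum>r\<le>L. (-1) ^ L * (omega - omega\<^sup>2) * (qpoch (q\<^sup>2) (q\<^sup>2) (2 * L + 1)
      * (base_alpha q r / (qpoch (q\<^sup>2) (q\<^sup>2) (L - r) * qpoch (q\<^sup>2) (q\<^sup>2) (L + r + 1)))))"
  proof (intro sum.cong refl)
    fix r :: nat
    have "(r + 1) * (r + 1) = r * r + (2 * r + 1)"
      by simp
    then have "q ^ (r * r) + q ^ ((r + 1) * (r + 1)) = q ^ (r * r) * (1 + q ^ (2 * r + 1))"
      by (simp only: power_add distrib_left mult_1_right)
    then show "(-1) ^ (L + r) * G r * ((q ^ (r * r) + q ^ ((r + 1) * (r + 1))) * of_int (leg3 (1 - int r)) * (omega - omega\<^sup>2))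
        = (-1) ^ L * (omega - omega\<^sup>2) * (qpoch (q\<^sup>2) (q\<^sup>2) (2 * L + 1)
          * (base_alpha q r / (qpoch (q\<^sup>2) (q\<^sup>2) (L - r) * qpoch (q\<^sup>2) (q\<^sup>2) (L + r + 1))))"
      by (simp add: G_def base_alpha_def power_add ac_simps)
  qed
  finally show ?thesis
    by (simp add: sum_distrib_left)
qed

lemma omega_combination_triple_sum_beta:
  assumes "norm q < 1"
  shows "omega ^ (2 * L + 1) * triple_sum q L omega - omega ^ (L + 2) * triple_sum q L (omega\<^sup>2)
       = (-1) ^ L * (omega - omega\<^sup>2) * (qpoch (q\<^sup>2) (q\<^sup>2) (2 * L + 1) * base_beta q L)"
  unfolding finite_triple_product[OF assms] omega_combination_product qfact_mult_base_beta[OF assms]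
  by (simp add: mult.commute)

lemma bailey_pair_base:
  assumes q: "norm q < 1"
  shows "bailey_pair (q\<^sup>2) (base_alpha q) (base_beta q)"
  unfolding bailey_pair_def
proof
  fix L
  have "(-1) ^ L * (omega - omega\<^sup>2) \<noteq> 0" and "qpoch (q\<^sup>2) (q\<^sup>2) (2 * L + 1) \<noteq> 0"
    using omega_neq_omega_sq qfact_nonzero[OF norm_power2_less_one[OF q]] by simp_all
  then show "base_beta q L = (\<Sum>r\<le>L. base_alpha q r / (qpoch (q\<^sup>2) (q\<^sup>2) (L - r) * qpoch (q\<^sup>2) (q\<^sup>2) (L + r + 1)))"
    using omega_combination_triple_sum_alpha[of L q] omega_combination_triple_sum_beta[OF q, of L] by simp
qed

definition tuple_cons :: "nat \<Rightarrow> (nat \<Rightarrow> nat) \<Rightarrow> nat \<Rightarrow> nat" where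
  "tuple_cons a m i = (if i = 0 then 0 else if i = 1 then a else m (i - 1))"

definition tuple_tail :: "(nat \<Rightarrow> nat) \<Rightarrow> nat \<Rightarrow> nat" where
  "tuple_tail n i = (if i = 0 then 0 else n (i + 1))"

lemma tuple_cons_in_tuples:
  assumes "m \<in> tuples v"
  shows "tuple_cons a m \<in> tuples (Suc v)"
  unfolding tuples_def
proof (intro CollectI allI impI)
  fix i assume "i \<notin> {1..Suc v}"
  then show "tuple_cons a m i = 0"
    using assms by (cases i) (auto simp: tuple_cons_def tuples_def)
qed

lemma tuple_tail_in_tuples: "n \<in> tuples (Suc v) \<Longrightarrow> tuple_tail n \<in> tuples v"
  by (auto simp: tuple_tail_def tuples_def)

lemma tuple_cons_tail: "n \<in> tuples (Suc v) \<Longrightarrow> tuple_cons (n 1) (tuple_tail n) = n"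
  by (auto simp: tuple_cons_def tuple_tail_def tuples_def)

lemma tuple_tail_cons: "m \<in> tuples v \<Longrightarrow> tuple_tail (tuple_cons a m) = m"
  by (auto simp: tuple_cons_def tuple_tail_def tuples_def)

lemma Nsum_tuple_cons_Suc: "1 \<le> i \<Longrightarrow> Nsum (tuple_cons a m) (Suc v) (Suc i) = Nsum m v i"
  unfolding Nsum_def sum.shift_bounds_cl_Suc_ivl by (intro sum.cong) (auto simp: tuple_cons_def)

lemma Nsum_tuple_cons_1: "Nsum (tuple_cons a m) (Suc v) 1 = a + Nsum m v 1"
proof -
  have "Nsum (tuple_cons a m) (Suc v) 1 = tuple_cons a m 1 + Nsum (tuple_cons a m) (Suc v) (Suc 1)"
    unfolding Nsum_def by (rule sum.atLeast_Suc_atMost) simp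
  then show ?thesis
    using Nsum_tuple_cons_Suc[of 1 a m v] by (simp add: tuple_cons_def)
qed

lemma sum_Nsum_tuple_cons:
  "(\<Sum>i=1..Suc v. g (Nsum (tuple_cons a m) (Suc v) i)) = g (a + Nsum m v 1) + (\<Sum>i=1..v. g (Nsum m v i))"
proof -
  have "(\<Sum>i=1..Suc v. g (Nsum (tuple_cons a m) (Suc v) i))
      = g (Nsum (tuple_cons a m) (Suc v) 1) + (\<Sum>i=Suc 1..Suc v. g (Nsum (tuple_cons a m) (Suc v) i))"
    by (rule sum.atLeast_Suc_atMost) simp
  also have "(\<Sum>i=Suc 1..Suc v. g (Nsum (tuple_cons a m) (Suc v) i)) = (\<Sum>i=1..v. g (Nsum m v i))"
    unfolding sum.shift_bounds_cl_Suc_ivl by (intro sum.cong) (auto simp: Nsum_tuple_cons_Suc)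
  finally show ?thesis
    by (simp only: Nsum_tuple_cons_1)
qed

definition multisum_weight :: "complex \<Rightarrow> nat \<Rightarrow> (nat \<Rightarrow> nat) \<Rightarrow> complex" where
  "multisum_weight q v n = (q\<^sup>2) ^ (\<Sum>i=1..v. Nsum n v i * (Nsum n v i + 1))
     / ((\<Prod>i=1..v-1. qpoch (q\<^sup>2) (q\<^sup>2) (n i)) * qpoch (q\<^sup>2) (q\<^sup>2) (2 * n v))
     * (qpoch (q ^ 3) (q ^ 6) (n v) / qpoch q (q\<^sup>2) (1 + n v))"

lemma multisum_weight_tuple_cons:
  assumes "1 \<le> v" and q: "norm q < 1"
  shows "multisum_weight q (Suc v) (tuple_cons a m)
       = (q\<^sup>2) ^ ((a + Nsum m v 1) * (a + Nsum m v 1 + 1)) / qpoch (q\<^sup>2) (q\<^sup>2) a * multisum_weight q v m"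
proof -
  have exponent: "(\<Sum>i=1..Suc v. Nsum (tuple_cons a m) (Suc v) i * (Nsum (tuple_cons a m) (Suc v) i + 1))
      = (a + Nsum m v 1) * (a + Nsum m v 1 + 1) + (\<Sum>i=1..v. Nsum m v i * (Nsum m v i + 1))"
    by (rule sum_Nsum_tuple_cons)
  have denominator: "(\<Prod>i=1..Suc v - 1. qpoch (q\<^sup>2) (q\<^sup>2) (tuple_cons a m i))
      = qpoch (q\<^sup>2) (q\<^sup>2) a * (\<Prod>i=1..v-1. qpoch (q\<^sup>2) (q\<^sup>2) (m i))"
  proof -
    have "(\<Prod>i=1..Suc v - 1. qpoch (q\<^sup>2) (q\<^sup>2) (tuple_cons a m i))
        = qpoch (q\<^sup>2) (q\<^sup>2) (tuple_cons a m 1) * (\<Prod>i=Suc 1..Suc (v - 1). qpoch (q\<^sup>2) (q\<^sup>2) (tuple_cons a m i))"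
      using \<open>1 \<le> v\<close> by (subst prod.atLeast_Suc_atMost) (auto simp: Suc_pred)
    also have "(\<Prod>i=Suc 1..Suc (v - 1). qpoch (q\<^sup>2) (q\<^sup>2) (tuple_cons a m i)) = (\<Prod>i=1..v-1. qpoch (q\<^sup>2) (q\<^sup>2) (m i))"
      unfolding prod.shift_bounds_cl_Suc_ivl by (intro prod.cong) (auto simp: tuple_cons_def)
    finally show ?thesis
      by (simp add: tuple_cons_def)
  qed
  have last: "tuple_cons a m (Suc v) = m v"
    using \<open>1 \<le> v\<close> by (simp add: tuple_cons_def)
  have "qpoch (q\<^sup>2) (q\<^sup>2) a \<noteq> 0"
    by (rule qfact_nonzero[OF norm_power2_less_one[OF q]])
  then show ?thesis
    unfolding multisum_weight_def exponent denominator last by (simp add: power_add field_simps)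
qed

definition bounded_tuples :: "nat \<Rightarrow> nat \<Rightarrow> (nat \<Rightarrow> nat) set" where
  "bounded_tuples v L = {n \<in> tuples v. Nsum n v 1 \<le> L}"

lemma finite_bounded_tuples: "finite (bounded_tuples v L)"
proof (rule finite_subset)
  show "bounded_tuples v L \<subseteq> {n. \<forall>i. (i \<in> {1..v} \<longrightarrow> n i \<in> {..L}) \<and> (i \<notin> {1..v} \<longrightarrow> n i = 0)}"
  proof
    fix n assume n: "n \<in> bounded_tuples v L"
    have "n i \<le> Nsum n v 1" if "i \<in> {1..v}" for i
      unfolding Nsum_def using that by (intro member_le_sum) auto
    then show "n \<in> {n. \<forall>i. (i \<in> {1..v} \<longrightarrow> n i \<in> {..L}) \<and> (i \<notin> {1..v} \<longrightarrow> n i = 0)}"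
      using n by (force simp: bounded_tuples_def tuples_def)
  qed
  show "finite {n. \<forall>i. (i \<in> {1..v} \<longrightarrow> n i \<in> {..L}) \<and> (i \<notin> {1..v} \<longrightarrow> n i = (0::nat))}"
    by (rule finite_set_of_finite_funs) auto
qed

definition multisum :: "complex \<Rightarrow> nat \<Rightarrow> nat \<Rightarrow> complex" where
  "multisum q v L = (\<Sum>n\<in>bounded_tuples v L. multisum_weight q v n / qpoch (q\<^sup>2) (q\<^sup>2) (L - Nsum n v 1))"

lemma bij_betw_tuple_cons:
  "bij_betw (\<lambda>(K, m). tuple_cons (K - Nsum m v 1) m)
     (SIGMA K:{..L}. bounded_tuples v K) (bounded_tuples (Suc v) L)"
proof (rule bij_betw_byWitness[where f' = "\<lambda>n. (Nsum n (Suc v) 1, tuple_tail n)"])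
  show "\<forall>Km\<in>SIGMA K:{..L}. bounded_tuples v K.
      (\<lambda>n. (Nsum n (Suc v) 1, tuple_tail n)) ((\<lambda>(K, m). tuple_cons (K - Nsum m v 1) m) Km) = Km"
    and "(\<lambda>(K, m). tuple_cons (K - Nsum m v 1) m) ` (SIGMA K:{..L}. bounded_tuples v K) \<subseteq> bounded_tuples (Suc v) L"
  proof safe
    fix K m assume m: "m \<in> bounded_tuples v K" "K \<le> L"
    then show N: "Nsum (tuple_cons (K - Nsum m v 1) m) (Suc v) 1 = K"
      using Nsum_tuple_cons_1[of "K - Nsum m v 1" m v] by (simp add: bounded_tuples_def)
    show "tuple_tail (tuple_cons (K - Nsum m v 1) m) = m"
      using m by (intro tuple_tail_cons[where v = v]) (simp add: bounded_tuples_def)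
    show "tuple_cons (K - Nsum m v 1) m \<in> bounded_tuples (Suc v) L"
      using m N by (simp add: bounded_tuples_def tuple_cons_in_tuples)
  qed
  show "\<forall>n\<in>bounded_tuples (Suc v) L.
      (\<lambda>(K, m). tuple_cons (K - Nsum m v 1) m) ((\<lambda>n. (Nsum n (Suc v) 1, tuple_tail n)) n) = n"
    and "(\<lambda>n. (Nsum n (Suc v) 1, tuple_tail n)) ` bounded_tuples (Suc v) L \<subseteq> (SIGMA K:{..L}. bounded_tuples v K)"
  proof safe
    fix n assume "n \<in> bounded_tuples (Suc v) L"
    then have n: "n \<in> tuples (Suc v)" "Nsum n (Suc v) 1 \<le> L"
      by (auto simp: bounded_tuples_def)
    have N: "Nsum n (Suc v) 1 = n 1 + Nsum (tuple_tail n) v 1"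
      using Nsum_tuple_cons_1[of "n 1" "tuple_tail n" v] tuple_cons_tail[OF n(1)] by simp
    show "tuple_cons (Nsum n (Suc v) 1 - Nsum (tuple_tail n) v 1) (tuple_tail n) = n"
      using N tuple_cons_tail[OF n(1)] by simp
    show "Nsum n (Suc v) 1 \<le> L" and "tuple_tail n \<in> bounded_tuples v (Nsum n (Suc v) 1)"
      using n N by (simp_all add: bounded_tuples_def tuple_tail_in_tuples)
  qed
qed

lemma multisum_Suc:
  assumes "1 \<le> v" and q: "norm q < 1"
  shows "multisum q (Suc v) L
       = (\<Sum>K\<le>L. (q\<^sup>2) ^ (K * (K + 1)) * multisum q v K / qpoch (q\<^sup>2) (q\<^sup>2) (L - K))"
proof -
  define F where "F n = multisum_weight q (Suc v) n / qpoch (q\<^sup>2) (q\<^sup>2) (L - Nsum n (Suc v) 1)" for n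
  have "(\<Sum>K\<le>L. (q\<^sup>2) ^ (K * (K + 1)) * multisum q v K / qpoch (q\<^sup>2) (q\<^sup>2) (L - K))
      = (\<Sum>(K, m)\<in>(SIGMA K:{..L}. bounded_tuples v K). (q\<^sup>2) ^ (K * (K + 1))
          / qpoch (q\<^sup>2) (q\<^sup>2) (K - Nsum m v 1) * multisum_weight q v m / qpoch (q\<^sup>2) (q\<^sup>2) (L - K))"
    by (simp add: sum.Sigma finite_bounded_tuples multisum_def sum_distrib_left sum_divide_distrib ac_simps)
  also have "\<dots> = (\<Sum>Km\<in>(SIGMA K:{..L}. bounded_tuples v K). F ((\<lambda>(K, m). tuple_cons (K - Nsum m v 1) m) Km))"
  proof (intro sum.cong refl)
    fix Km assume "Km \<in> (SIGMA K:{..L}. bounded_tuples v K)"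
    then obtain K m where Km: "Km = (K, m)" and "Nsum m v 1 \<le> K"
      by (auto simp: bounded_tuples_def)
    then have "Nsum (tuple_cons (K - Nsum m v 1) m) (Suc v) 1 = K"
      using Nsum_tuple_cons_1[of "K - Nsum m v 1" m v] by simp
    with \<open>Nsum m v 1 \<le> K\<close> show "(\<lambda>(K, m). (q\<^sup>2) ^ (K * (K + 1)) / qpoch (q\<^sup>2) (q\<^sup>2) (K - Nsum m v 1)
        * multisum_weight q v m / qpoch (q\<^sup>2) (q\<^sup>2) (L - K)) Km
      = F ((\<lambda>(K, m). tuple_cons (K - Nsum m v 1) m) Km)"
      by (simp add: Km F_def multisum_weight_tuple_cons[OF \<open>1 \<le> v\<close> q])
  qed
  also have "\<dots> = multisum q (Suc v) L"
    unfolding multisum_def F_def[symmetric] by (rule sum.reindex_bij_betw[OF bij_betw_tuple_cons])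
  finally show ?thesis ..
qed

lemma multisum_1:
  "multisum q 1 L = (\<Sum>K\<le>L. (q\<^sup>2) ^ (K * (K + 1)) * base_beta q K / qpoch (q\<^sup>2) (q\<^sup>2) (L - K))"
  unfolding multisum_def
proof (rule sum.reindex_bij_witness[symmetric, where j = "\<lambda>K i. if i = 1 then K else 0" and i = "\<lambda>n. n 1"])
  fix K assume "K \<in> {..L}"
  then show "(\<lambda>i. if i = 1 then K else 0) \<in> bounded_tuples 1 L"
    by (simp add: bounded_tuples_def tuples_def Nsum_def)
  show "multisum_weight q 1 (\<lambda>i. if i = 1 then K else 0) / qpoch (q\<^sup>2) (q\<^sup>2) (L - Nsum (\<lambda>i. if i = 1 then K else 0) 1 1)
      = (q\<^sup>2) ^ (K * (K + 1)) * base_beta q K / qpoch (q\<^sup>2) (q\<^sup>2) (L - K)"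
    by (simp add: multisum_weight_def base_beta_def Nsum_def)
qed (auto simp: bounded_tuples_def tuples_def Nsum_def)

lemma bailey_pair_multisum:
  assumes q: "norm q < 1" and "1 \<le> v"
  shows "bailey_pair (q\<^sup>2) (\<lambda>r. (q\<^sup>2) ^ (v * (r * (r + 1))) * base_alpha q r) (multisum q v)"
  using \<open>1 \<le> v\<close>
proof (induction v rule: dec_induct)
  case base
  have "multisum q 1 = (\<lambda>L. \<Sum>K\<le>L. (q\<^sup>2) ^ (K * (K + 1)) * base_beta q K / qpoch (q\<^sup>2) (q\<^sup>2) (L - K))"
    by (intro ext multisum_1)
  then show ?case
    using bailey_lemma[OF norm_power2_less_one[OF q] bailey_pair_base[OF q]] by simp
next
  case (step v)
  have "multisum q (Suc v) = (\<lambda>L. \<Sum>K\<le>L. (q\<^sup>2) ^ (K * (K + 1)) * multisum q v K / qpoch (q\<^sup>2) (q\<^sup>2) (L - K))"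
    using multisum_Suc[OF step.hyps(1) q] by auto
  then show ?case
    using bailey_lemma[OF norm_power2_less_one[OF q] step.IH] by (simp add: power_add mult.assoc)
qed

lemma infsum_tuples_eq_multisum:
  "(\<Sum>\<^sub>\<infinity>n\<in>tuples v. multisum_weight q v n
      * (qpoch (q\<^sup>2) (q\<^sup>2) (2 * L + 1) * inv_qfac (q\<^sup>2) (int L - int (Nsum n v 1))))
   = qpoch (q\<^sup>2) (q\<^sup>2) (2 * L + 1) * multisum q v L"
proof -
  have "(\<Sum>\<^sub>\<infinity>n\<in>tuples v. multisum_weight q v n
      * (qpoch (q\<^sup>2) (q\<^sup>2) (2 * L + 1) * inv_qfac (q\<^sup>2) (int L - int (Nsum n v 1))))
    = (\<Sum>\<^sub>\<infinity>n\<in>bounded_tuples v L. multisum_weight q v n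
      * (qpoch (q\<^sup>2) (q\<^sup>2) (2 * L + 1) * inv_qfac (q\<^sup>2) (int L - int (Nsum n v 1))))"
    by (intro infsum_cong_neutral) (auto simp: bounded_tuples_def inv_qfac_def)
  also have "\<dots> = (\<Sum>n\<in>bounded_tuples v L. qpoch (q\<^sup>2) (q\<^sup>2) (2 * L + 1)
      * (multisum_weight q v n / qpoch (q\<^sup>2) (q\<^sup>2) (L - Nsum n v 1)))"
    by (simp add: finite_bounded_tuples) (auto simp: bounded_tuples_def inv_qfac_def nat_diff_distrib intro: sum.cong)
  also have "\<dots> = qpoch (q\<^sup>2) (q\<^sup>2) (2 * L + 1) * multisum q v L"
    by (simp add: multisum_def sum_distrib_left)
  finally show ?thesis .
qed

lemma sum_int_interval_in_pairs:
  "(\<Sum>j\<in>{- int L..int L + 1}. h j) = (\<Sum>r\<le>L. h (int r + 1) + h (- int r))"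
proof -
  have interval: "{- int L..int L + 1} = (\<lambda>r. int r + 1) ` {..L} \<union> (\<lambda>r. - int r) ` {..L}"
  proof (intro set_eqI iffI)
    fix j assume j: "j \<in> {- int L..int L + 1}"
    show "j \<in> (\<lambda>r. int r + 1) ` {..L} \<union> (\<lambda>r. - int r) ` {..L}"
    proof (cases "j \<ge> 1")
      case True
      then have "j = int (nat (j - 1)) + 1" "nat (j - 1) \<in> {..L}" using j by auto
      then show ?thesis by blast
    next
      case False
      then have "j = - int (nat (- j))" "nat (- j) \<in> {..L}" using j by auto
      then show ?thesis by blast
    qed
  qed auto
  have "(\<Sum>j\<in>{- int L..int L + 1}. h j)
      = (\<Sum>j\<in>(\<lambda>r. int r + 1) ` {..L}. h j) + (\<Sum>j\<in>(\<lambda>r. - int r) ` {..L}. h j)"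
    unfolding interval by (rule sum.union_disjoint) force+
  also have "\<dots> = (\<Sum>r\<le>L. h (int r + 1)) + (\<Sum>r\<le>L. h (- int r))"
    by (simp add: sum.reindex inj_on_def)
  finally show ?thesis
    by (simp add: sum.distrib)
qed

lemma leg3_shift: "leg3 (int r + 1 + 1) = - leg3 (1 - int r)"
proof -
  have "(int r + 1 + 1) mod 3 = 1 \<longleftrightarrow> (1 - int r) mod 3 = 2"
    and "(int r + 1 + 1) mod 3 = 2 \<longleftrightarrow> (1 - int r) mod 3 = 1"
    by presburger+
  then show ?thesis
    unfolding leg3_def by auto
qed

lemma qbinom_odd_symmetric:
  assumes "r \<le> L"
  shows "qbinom p (2 * int L + 1) (int L + (int r + 1)) = qpoch p p (2 * L + 1) / (qpoch p p (L - r) * qpoch p p (L + r + 1))"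
    and "qbinom p (2 * int L + 1) (int L + - int r) = qpoch p p (2 * L + 1) / (qpoch p p (L - r) * qpoch p p (L + r + 1))"
proof -
  have "nat (2 * int L + 1) = 2 * L + 1" "nat (int L + (int r + 1)) = L + r + 1" "nat (int L + - int r) = L - r"
    "nat (2 * int L + 1 - (int L + (int r + 1))) = L - r" "nat (2 * int L + 1 - (int L + - int r)) = L + r + 1"
    using assms by auto
  then show "qbinom p (2 * int L + 1) (int L + (int r + 1)) = qpoch p p (2 * L + 1) / (qpoch p p (L - r) * qpoch p p (L + r + 1))"
    and "qbinom p (2 * int L + 1) (int L + - int r) = qpoch p p (2 * L + 1) / (qpoch p p (L - r) * qpoch p p (L + r + 1))"
    using assms by (simp_all add: qbinom_def mult.commute)
qed

definition theta_term :: "complex \<Rightarrow> nat \<Rightarrow> nat \<Rightarrow> int \<Rightarrow> complex" where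
  "theta_term q v L j = (-1) powi j * q powi ((2 * int v + 1) * j\<^sup>2 - 2 * int v * j)
     * of_int (leg3 (j + 1)) * qbinom (q\<^sup>2) (2 * int L + 1) (int L + j)"

lemma theta_term_pair:
  assumes r: "r \<le> L"
  shows "theta_term q v L (int r + 1) + theta_term q v L (- int r)
       = qpoch (q\<^sup>2) (q\<^sup>2) (2 * L + 1) * ((q\<^sup>2) ^ (v * (r * (r + 1))) * base_alpha q r
          / (qpoch (q\<^sup>2) (q\<^sup>2) (L - r) * qpoch (q\<^sup>2) (q\<^sup>2) (L + r + 1)))"
proof -
  define E where "E = v * (r * (r + 1))"
  have exponents: "(2 * int v + 1) * (int r + 1)\<^sup>2 - 2 * int v * (int r + 1) = int (2 * E + r * r + (2 * r + 1))"
    "(2 * int v + 1) * (- int r)\<^sup>2 - 2 * int v * (- int r) = int (2 * E + r * r)"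
    by (simp_all add: E_def power2_eq_square algebra_simps)
  have signs: "(-1::complex) powi (int r + 1) = - ((-1) ^ r)" "(-1::complex) powi (- int r) = (-1) ^ r"
    by (simp_all add: power_int_add power_int_minus flip: power_inverse)
  have "theta_term q v L (int r + 1) = - ((-1) ^ r) * ((q\<^sup>2) ^ E * q ^ (r * r) * q ^ (2 * r + 1))
        * of_int (- leg3 (1 - int r)) * qbinom (q\<^sup>2) (2 * int L + 1) (int L + (int r + 1))"
    and "theta_term q v L (- int r) = (-1) ^ r * ((q\<^sup>2) ^ E * q ^ (r * r))
        * of_int (leg3 (1 - int r)) * qbinom (q\<^sup>2) (2 * int L + 1) (int L + - int r)"
    unfolding theta_term_def leg3_shift exponents signs power_int_of_nat by (simp_all add: power_add power_mult)
  then show ?thesis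
    unfolding qbinom_odd_symmetric[OF r] base_alpha_def E_def[symmetric] by (simp add: algebra_simps add_divide_distrib)
qed

lemma theta_series_eq:
  "(\<Sum>\<^sub>\<infinity>j\<in>(UNIV :: int set). theta_term q v L j)
   = qpoch (q\<^sup>2) (q\<^sup>2) (2 * L + 1)
      * (\<Sum>r\<le>L. (q\<^sup>2) ^ (v * (r * (r + 1))) * base_alpha q r / (qpoch (q\<^sup>2) (q\<^sup>2) (L - r) * qpoch (q\<^sup>2) (q\<^sup>2) (L + r + 1)))"
proof -
  have "(\<Sum>\<^sub>\<infinity>j\<in>(UNIV :: int set). theta_term q v L j) = (\<Sum>\<^sub>\<infinity>j\<in>{- int L..int L + 1}. theta_term q v L j)"
    by (intro infsum_cong_neutral) (auto simp: theta_term_def qbinom_def)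
  also have "\<dots> = (\<Sum>r\<le>L. theta_term q v L (int r + 1) + theta_term q v L (- int r))"
    by (simp add: sum_int_interval_in_pairs)
  also have "\<dots> = qpoch (q\<^sup>2) (q\<^sup>2) (2 * L + 1)
      * (\<Sum>r\<le>L. (q\<^sup>2) ^ (v * (r * (r + 1))) * base_alpha q r / (qpoch (q\<^sup>2) (q\<^sup>2) (L - r) * qpoch (q\<^sup>2) (q\<^sup>2) (L + r + 1)))"
    by (simp add: theta_term_pair sum_distrib_left)
  finally show ?thesis .
qed

theorem mainTheorem11:
  fixes q :: complex and v L :: nat
  assumes "norm q < 1" and "v \<ge> 1"
  shows "(\<Sum>\<^sub>\<infinity>n\<in>tuples v.
            (q\<^sup>2) ^ (\<Sum>i=1..v. Nsum n v i * (Nsum n v i + 1))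
            / ((\<Prod>i=1..v-1. qpoch (q\<^sup>2) (q\<^sup>2) (n i)) * qpoch (q\<^sup>2) (q\<^sup>2) (2 * n v))
            * (qpoch (q ^ 3) (q ^ 6) (n v) / qpoch q (q\<^sup>2) (1 + n v))
            * (qpoch (q\<^sup>2) (q\<^sup>2) (2 * L + 1) * inv_qfac (q\<^sup>2) (int L - int (Nsum n v 1))))
       = (\<Sum>\<^sub>\<infinity>j\<in>(UNIV :: int set).
            (-1) powi j * q powi ((2 * int v + 1) * j\<^sup>2 - 2 * int v * j)
            * of_int (leg3 (j + 1)) * qbinom (q\<^sup>2) (2 * int L + 1) (int L + j))"
proof -
  have "multisum q v L = (\<Sum>r\<le>L. (q\<^sup>2) ^ (v * (r * (r + 1))) * base_alpha q r
      / (qpoch (q\<^sup>2) (q\<^sup>2) (L - r) * qpoch (q\<^sup>2) (q\<^sup>2) (L + r + 1)))"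
    using bailey_pair_multisum[OF assms] by (simp add: bailey_pair_def)
  then show ?thesis
    using infsum_tuples_eq_multisum[where q = q and v = v and L = L] theta_series_eq[where q = q and v = v and L = L]
    unfolding multisum_weight_def theta_term_def by simp
qed

end
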